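(* Let $\boldsymbol\beta$ be ERGM parameters, $m_n\to\infty$ with $\binom{m_n}{2}=o(\log n)$, and let $\mathcal{G}_{n,1},\dots,\mathcal{G}_{n,n}$ be i.i.d. from $\mathbb{P}_{\boldsymbol\beta}$ on $m_n$ vertices. For a graph $G$ on $m_n$ vertices let $p_{\boldsymbol\beta}(G)=\mathbb{P}_{\boldsymbol\beta}(G)$ and $X_{i,G}=\mathbf{1}(\mathcal{G}_{n,i}=G)/p_{\boldsymbol\beta}(G)$. Then for every $\epsilon>0$, \[\mathbb{P}\Big(\sup_{G}\Big|\frac1n\sum_{i=1}^nX_{i,G}-1\Big|>\frac{\epsilon}{m_n}\Big)\to0,\] the supremum being over all simple graphs $G$ on vertex set $\{1,\dots,m_n\}$.
   Context: ERGM: $\mathbb{P}_{\boldsymbol\beta}(G)=Z_N(\boldsymbol\beta)^{-1}\exp\{N^2\sum_{k=1}^K\beta_kt(T_k,G)\}$ on simple graphs with vertex set $\{1,\dots,N\}$, where $T_1$ is a single edge, $T_2,\dots,T_K$ are fixed graphs with at least two edges, $\boldsymbol\beta\in\mathbb{R}^K$, and $t(T,G)=\mathrm{hom}(T,G)/N^{v(T)}$ with $\mathrm{hom}$ counting edge-preserving maps $V(T)\to V(G)$. *)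

theory Defs
  imports "HOL-Analysis.Analysis" "HOL-Library.FuncSet" "HOL-Library.Landau_Symbols"
begin

definition simple_graph :: "'a set \<Rightarrow> 'a set set \<Rightarrow> bool" where
  "simple_graph V E \<longleftrightarrow> finite V \<and> (\<forall>e\<in>E. e \<subseteq> V \<and> card e = 2)"

definition graphs_on :: "nat \<Rightarrow> nat set set set" where
  "graphs_on N = {E. simple_graph {1..N} E}"

definition hom_count :: "nat set \<times> nat set set \<Rightarrow> nat \<Rightarrow> nat set set \<Rightarrow> nat" where
  "hom_count T N G = card {\<phi> \<in> fst T \<rightarrow>\<^sub>E {1..N}. \<forall>e\<in>snd T. \<phi> ` e \<in> G}"

definition hom_density :: "nat set \<times> nat set set \<Rightarrow> nat \<Rightarrow> nat set set \<Rightarrow> real" where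
  "hom_density T N G = real (hom_count T N G) / real N ^ card (fst T)"

definition ergm_weight :: "nat \<Rightarrow> (nat \<Rightarrow> real) \<Rightarrow> (nat \<Rightarrow> nat set \<times> nat set set) \<Rightarrow> nat \<Rightarrow> nat set set \<Rightarrow> real" where
  "ergm_weight K \<beta> T N G = exp (real N ^ 2 * (\<Sum>k=1..K. \<beta> k * hom_density (T k) N G))"

definition ergm_prob :: "nat \<Rightarrow> (nat \<Rightarrow> real) \<Rightarrow> (nat \<Rightarrow> nat set \<times> nat set set) \<Rightarrow> nat \<Rightarrow> nat set set \<Rightarrow> real" where
  "ergm_prob K \<beta> T N G = ergm_weight K \<beta> T N G / (\<Sum>H\<in>graphs_on N. ergm_weight K \<beta> T N H)"

definition iid_prob :: "nat \<Rightarrow> (nat \<Rightarrow> real) \<Rightarrow> (nat \<Rightarrow> nat set \<times> nat set set) \<Rightarrow> nat \<Rightarrow> nat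
    \<Rightarrow> ((nat \<Rightarrow> nat set set) \<Rightarrow> bool) \<Rightarrow> real" where
  "iid_prob K \<beta> T N n P =
     (\<Sum>s\<in>{1..n} \<rightarrow>\<^sub>E graphs_on N. if P s then (\<Prod>i=1..n. ergm_prob K \<beta> T N (s i)) else 0)"

definition X_stat :: "nat \<Rightarrow> (nat \<Rightarrow> real) \<Rightarrow> (nat \<Rightarrow> nat set \<times> nat set set) \<Rightarrow> nat
    \<Rightarrow> (nat \<Rightarrow> nat set set) \<Rightarrow> nat \<Rightarrow> nat set set \<Rightarrow> real" where
  "X_stat K \<beta> T N s i G = (if s i = G then 1 else 0) / ergm_prob K \<beta> T N G"

end

(*
  Chebyshev's inequality plus a union bound over all graphs.  For a fixed graph G the
  variables X_{i,G} - 1 are i.i.d. and centred with variance 1/p(G) - 1, so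
  P(|mean - 1| > d) <= 1/(p(G) d^2 n).  Since homomorphism densities lie in [0,1], the
  ERGM exponents of any two graphs differ by at most 2 N^2 sum_k |beta_k|, whence
  1/p(G) <= 2^(N choose 2) exp(2 N^2 sum_k |beta_k|).  Summing over the at most
  2^(N choose 2) graphs with d = eps/N bounds the failure probability by
  4 exp((3 + 8 sum_k |beta_k|) (N choose 2)) / (eps^2 n), which tends to 0 because
  (m_n choose 2) = o(log n).
*)
theory Submission
  imports Defs "HOL-Real_Asymp.Real_Asymp"
begin

lemma iid_pair_moment:
  fixes p g h :: "'a \<Rightarrow> real"
  assumes I: "finite I" and \<Omega>: "finite \<Omega>" and p: "sum p \<Omega> = 1" and ij: "i \<in> I" "j \<in> I"
  shows "(\<Sum>s\<in>I \<rightarrow>\<^sub>E \<Omega>. (\<Prod>k\<in>I. p (s k)) * (g (s i) * h (s j))) =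
     (if i = j then (\<Sum>x\<in>\<Omega>. p x * (g x * h x)) else (\<Sum>x\<in>\<Omega>. p x * g x) * (\<Sum>x\<in>\<Omega>. p x * h x))"
proof -
  define f where "f k x = p x * (if k = i then g x else 1) * (if k = j then h x else 1)" for k x
  have factor: "(\<Prod>k\<in>I. p (s k)) * (g (s i) * h (s j)) = (\<Prod>k\<in>I. f k (s k))" for s
    using I ij by (simp add: f_def prod.distrib)
  have "(\<Sum>s\<in>I \<rightarrow>\<^sub>E \<Omega>. \<Prod>k\<in>I. f k (s k)) = (\<Prod>k\<in>I. \<Sum>x\<in>\<Omega>. f k x)"
    using prod_sum_PiE[of I "\<lambda>_. \<Omega>" f] I \<Omega> by simp
  also have "\<dots> = (\<Sum>x\<in>\<Omega>. f i x) * (\<Prod>k\<in>I-{i}. \<Sum>x\<in>\<Omega>. f k x)"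
    using I ij by (simp add: prod.remove)
  also have "(\<Prod>k\<in>I-{i}. \<Sum>x\<in>\<Omega>. f k x) = (if i = j then 1 else \<Sum>x\<in>\<Omega>. f j x)"
  proof (cases "i = j")
    case True
    then show ?thesis using p by (simp add: f_def)
  next
    case False
    have "(\<Prod>k\<in>I-{i}. \<Sum>x\<in>\<Omega>. f k x) = (\<Sum>x\<in>\<Omega>. f j x) * (\<Prod>k\<in>I-{i}-{j}. \<Sum>x\<in>\<Omega>. f k x)"
      using I ij False by (intro prod.remove) auto
    also have "(\<Prod>k\<in>I-{i}-{j}. \<Sum>x\<in>\<Omega>. f k x) = 1"
      using p by (intro prod.neutral) (auto simp: f_def)
    finally show ?thesis using False by simp
  qed
  finally show ?thesis by (auto simp: factor f_def mult.assoc)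
qed

lemma iid_sum_second_moment:
  fixes p Z :: "'a \<Rightarrow> real"
  assumes I: "finite I" and \<Omega>: "finite \<Omega>" and p: "sum p \<Omega> = 1"
    and centred: "(\<Sum>x\<in>\<Omega>. p x * Z x) = 0"
  shows "(\<Sum>s\<in>I \<rightarrow>\<^sub>E \<Omega>. (\<Prod>k\<in>I. p (s k)) * (\<Sum>i\<in>I. Z (s i))\<^sup>2)
     = real (card I) * (\<Sum>x\<in>\<Omega>. p x * (Z x)\<^sup>2)"
proof -
  have "(\<Sum>s\<in>I \<rightarrow>\<^sub>E \<Omega>. (\<Prod>k\<in>I. p (s k)) * (\<Sum>i\<in>I. Z (s i))\<^sup>2)
     = (\<Sum>s\<in>I \<rightarrow>\<^sub>E \<Omega>. \<Sum>i\<in>I. \<Sum>j\<in>I. (\<Prod>k\<in>I. p (s k)) * (Z (s i) * Z (s j)))"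
    by (simp only: power2_eq_square sum_product sum_distrib_left[of "prod _ _"])
  also have "\<dots> = (\<Sum>i\<in>I. \<Sum>j\<in>I. \<Sum>s\<in>I \<rightarrow>\<^sub>E \<Omega>. (\<Prod>k\<in>I. p (s k)) * (Z (s i) * Z (s j)))"
    by (subst sum.swap) (simp add: sum.swap[of _ I "I \<rightarrow>\<^sub>E \<Omega>"])
  also have "\<dots> = (\<Sum>i\<in>I. \<Sum>j\<in>I. if i = j then \<Sum>x\<in>\<Omega>. p x * (Z x * Z x) else 0)"
    by (intro sum.cong refl) (simp add: iid_pair_moment I \<Omega> p centred)
  finally show ?thesis using I by (simp add: power2_eq_square)
qed

lemma one_le_sum_squares_if_Max_gt:
  fixes y :: "'g \<Rightarrow> real"
  assumes "finite \<Gamma>" "\<Gamma> \<noteq> {}" "\<delta> > 0" "(MAX g\<in>\<Gamma>. \<bar>y g\<bar>) > \<delta>"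
  shows "1 \<le> (\<Sum>g\<in>\<Gamma>. (y g)\<^sup>2 / \<delta>\<^sup>2)"
proof -
  obtain g where g: "g \<in> \<Gamma>" "\<bar>y g\<bar> > \<delta>"
    using assms by (auto simp: Max_gr_iff)
  then have "1 < (\<bar>y g\<bar> / \<delta>)\<^sup>2"
    using \<open>\<delta> > 0\<close> by (intro one_less_power) auto
  also have "\<dots> = (y g)\<^sup>2 / \<delta>\<^sup>2"
    by (simp add: power_divide)
  also have "\<dots> \<le> (\<Sum>g\<in>\<Gamma>. (y g)\<^sup>2 / \<delta>\<^sup>2)"
    using g assms(1) by (intro member_le_sum) auto
  finally show ?thesis by simp
qed

lemma iid_max_deviation_prob_le:
  fixes p :: "'a \<Rightarrow> real" and Z :: "'g \<Rightarrow> 'a \<Rightarrow> real"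
  assumes \<Omega>: "finite \<Omega>" and p_nonneg: "\<And>x. x \<in> \<Omega> \<Longrightarrow> 0 \<le> p x" and p: "sum p \<Omega> = 1"
    and \<Gamma>: "finite \<Gamma>" "\<Gamma> \<noteq> {}" and centred: "\<And>g. g \<in> \<Gamma> \<Longrightarrow> (\<Sum>x\<in>\<Omega>. p x * Z g x) = 0"
    and \<delta>: "\<delta> > 0"
  shows "(\<Sum>s\<in>{1..n} \<rightarrow>\<^sub>E \<Omega>.
            if (MAX g\<in>\<Gamma>. \<bar>(\<Sum>i=1..n. Z g (s i)) / real n\<bar>) > \<delta> then \<Prod>i=1..n. p (s i) else 0)
     \<le> (\<Sum>g\<in>\<Gamma>. \<Sum>x\<in>\<Omega>. p x * (Z g x)\<^sup>2) / (\<delta>\<^sup>2 * real n)"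
proof -
  define Y where "Y s g = (\<Sum>i=1..n. Z g (s i)) / real n" for s g
  define P where "P s = (\<Prod>i=1..n. p (s i))" for s
  have chebyshev: "(if (MAX g\<in>\<Gamma>. \<bar>Y s g\<bar>) > \<delta> then P s else 0) \<le> P s * (\<Sum>g\<in>\<Gamma>. (Y s g)\<^sup>2 / \<delta>\<^sup>2)"
    if "s \<in> {1..n} \<rightarrow>\<^sub>E \<Omega>" for s
  proof -
    have "P s \<ge> 0"
      using that p_nonneg by (auto simp: P_def intro!: prod_nonneg)
    then show ?thesis
      using one_le_sum_squares_if_Max_gt[OF \<Gamma> \<delta>, of "Y s"] mult_left_mono[of 1 _ "P s"]
      by (auto intro!: mult_nonneg_nonneg sum_nonneg)
  qed
  have "(\<Sum>s\<in>{1..n} \<rightarrow>\<^sub>E \<Omega>. if (MAX g\<in>\<Gamma>. \<bar>Y s g\<bar>) > \<delta> then P s else 0)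
      \<le> (\<Sum>s\<in>{1..n} \<rightarrow>\<^sub>E \<Omega>. P s * (\<Sum>g\<in>\<Gamma>. (Y s g)\<^sup>2 / \<delta>\<^sup>2))"
    by (intro sum_mono chebyshev)
  also have "\<dots> = (\<Sum>g\<in>\<Gamma>. \<Sum>s\<in>{1..n} \<rightarrow>\<^sub>E \<Omega>. P s * (\<Sum>i=1..n. Z g (s i))\<^sup>2 / (\<delta>\<^sup>2 * (real n)\<^sup>2))"
    by (simp add: Y_def power_divide sum_distrib_left sum.swap[of _ \<Gamma>] mult_ac)
  also have "\<dots> = (\<Sum>g\<in>\<Gamma>. (\<Sum>s\<in>{1..n} \<rightarrow>\<^sub>E \<Omega>. P s * (\<Sum>i=1..n. Z g (s i))\<^sup>2) / (\<delta>\<^sup>2 * (real n)\<^sup>2))"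
    by (simp add: sum_divide_distrib)
  also have "\<dots> = (\<Sum>g\<in>\<Gamma>. real n * (\<Sum>x\<in>\<Omega>. p x * (Z g x)\<^sup>2) / (\<delta>\<^sup>2 * (real n)\<^sup>2))"
    by (intro sum.cong refl) (simp add: P_def iid_sum_second_moment \<Omega> p centred)
  also have "\<dots> = (\<Sum>g\<in>\<Gamma>. \<Sum>x\<in>\<Omega>. p x * (Z g x)\<^sup>2) / (\<delta>\<^sup>2 * real n)"
    by (cases "n = 0") (simp_all add: sum_divide_distrib power2_eq_square mult.assoc)
  finally show ?thesis unfolding P_def Y_def .
qed

lemma indicator_ratio_centred:
  fixes p :: "'a \<Rightarrow> real"
  assumes "finite \<Omega>" "sum p \<Omega> = 1" "G \<in> \<Omega>" "p G > 0"
  shows "(\<Sum>x\<in>\<Omega>. p x * ((if x = G then 1 else 0) / p G - 1)) = 0"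
proof -
  have "(\<Sum>x\<in>\<Omega>. p x * ((if x = G then 1 else 0) / p G - 1)) = (\<Sum>x\<in>\<Omega>. (if x = G then 1 else 0) - p x)"
    using assms(4) by (intro sum.cong refl) (auto simp: field_simps)
  then show ?thesis using assms(1-3) by (simp add: sum_subtractf)
qed

lemma indicator_ratio_second_moment:
  fixes p :: "'a \<Rightarrow> real"
  assumes "finite \<Omega>" "sum p \<Omega> = 1" "G \<in> \<Omega>" "p G > 0"
  shows "(\<Sum>x\<in>\<Omega>. p x * ((if x = G then 1 else 0) / p G - 1)\<^sup>2) = 1 / p G - 1"
proof -
  have "(\<Sum>x\<in>\<Omega>. p x * ((if x = G then 1 else 0) / p G - 1)\<^sup>2)
      = p G * (1 / p G - 1)\<^sup>2 + (\<Sum>x\<in>\<Omega>-{G}. p x)"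
    using assms(1,3) by (simp add: sum.remove)
  also have "\<dots> = p G * (1 / p G - 1)\<^sup>2 + (1 - p G)"
    using assms(1-3) by (simp add: sum_diff1)
  also have "\<dots> = 1 / p G - 1"
    using assms(4) by (simp add: field_simps power2_eq_square)
  finally show ?thesis .
qed

lemma finite_graphs_on: "finite (graphs_on N)"
  and empty_in_graphs_on: "{} \<in> graphs_on N"
  and card_graphs_on_le: "card (graphs_on N) \<le> 2 ^ (N choose 2)"
proof -
  have sub: "graphs_on N \<subseteq> Pow {e. e \<subseteq> {1..N} \<and> card e = 2}"
    by (auto simp: graphs_on_def simple_graph_def)
  show "finite (graphs_on N)"
    by (rule finite_subset[OF sub]) auto
  show "{} \<in> graphs_on N"
    by (simp add: graphs_on_def simple_graph_def)
  have "card (graphs_on N) \<le> card (Pow {e. e \<subseteq> {1..N} \<and> card e = 2})"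
    by (rule card_mono[OF _ sub]) auto
  also have "\<dots> = 2 ^ (N choose 2)"
    using n_subsets[of "{1..N}" 2] by (simp add: card_Pow)
  finally show "card (graphs_on N) \<le> 2 ^ (N choose 2)" .
qed

lemma card_graphs_on_le_exp: "real (card (graphs_on N)) \<le> exp (real (N choose 2))"
proof -
  have "real (card (graphs_on N)) \<le> 2 ^ (N choose 2)"
    using card_graphs_on_le[of N] by (metis of_nat_le_iff of_nat_numeral of_nat_power)
  also have "\<dots> \<le> exp 1 ^ (N choose 2)"
    using exp_ge_add_one_self[of 1] by (intro power_mono) auto
  finally show ?thesis using exp_of_nat_mult[of "N choose 2" "1::real"] by simp
qed

lemma hom_density_nonneg_le_one:
  assumes "finite (fst T)"
  shows "0 \<le> hom_density T N G" "hom_density T N G \<le> 1"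
proof -
  have "hom_count T N G \<le> card (fst T \<rightarrow>\<^sub>E {1..N})"
    unfolding hom_count_def using assms by (intro card_mono finite_PiE) auto
  also have "\<dots> = N ^ card (fst T)"
    using assms by (simp add: card_PiE)
  finally have "real (hom_count T N G) \<le> real N ^ card (fst T)"
    by (metis of_nat_le_iff of_nat_power)
  then show "0 \<le> hom_density T N G" "hom_density T N G \<le> 1"
    by (auto simp: hom_density_def divide_le_eq_1)
qed

lemma ergm_exponent_abs_le:
  assumes "\<forall>k\<in>{1..K}. finite (fst (T k))"
  shows "\<bar>real N ^ 2 * (\<Sum>k=1..K. \<beta> k * hom_density (T k) N G)\<bar> \<le> real N ^ 2 * (\<Sum>k=1..K. \<bar>\<beta> k\<bar>)"
proof -
  have "\<bar>\<Sum>k=1..K. \<beta> k * hom_density (T k) N G\<bar> \<le> (\<Sum>k=1..K. \<bar>\<beta> k * hom_density (T k) N G\<bar>)"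
    by (rule sum_abs)
  also have "\<dots> \<le> (\<Sum>k=1..K. \<bar>\<beta> k\<bar>)"
    using assms hom_density_nonneg_le_one
    by (intro sum_mono) (simp add: abs_mult mult_left_le)
  finally show ?thesis
    by (simp add: abs_mult mult_left_mono)
qed

lemma ergm_partition_function_pos: "(\<Sum>H\<in>graphs_on N. ergm_weight K \<beta> T N H) > 0"
  using finite_graphs_on empty_in_graphs_on by (intro sum_pos) (auto simp: ergm_weight_def)

lemma ergm_prob_pos: "ergm_prob K \<beta> T N G > 0"
  unfolding ergm_prob_def using ergm_partition_function_pos by (simp add: ergm_weight_def)

lemma sum_ergm_prob: "(\<Sum>G\<in>graphs_on N. ergm_prob K \<beta> T N G) = 1"
  unfolding ergm_prob_def using ergm_partition_function_pos[of K \<beta> T N]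
  by (simp add: sum_divide_distrib[symmetric])

lemma inverse_ergm_prob_le:
  assumes "\<forall>k\<in>{1..K}. finite (fst (T k))"
  shows "1 / ergm_prob K \<beta> T N G
    \<le> real (card (graphs_on N)) * exp (2 * real N ^ 2 * (\<Sum>k=1..K. \<bar>\<beta> k\<bar>))"
proof -
  define e where "e H = real N ^ 2 * (\<Sum>k=1..K. \<beta> k * hom_density (T k) N H)" for H
  define B where "B = real N ^ 2 * (\<Sum>k=1..K. \<bar>\<beta> k\<bar>)"
  have e_le: "\<bar>e H\<bar> \<le> B" for H
    unfolding e_def B_def using assms by (rule ergm_exponent_abs_le)
  have "1 / ergm_prob K \<beta> T N G = (\<Sum>H\<in>graphs_on N. exp (e H - e G))"
    by (simp add: ergm_prob_def ergm_weight_def e_def exp_diff sum_divide_distrib)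
  also have "\<dots> \<le> real (card (graphs_on N)) * exp (2 * B)"
    using e_le[of G] e_le by (intro sum_bounded_above) (smt (verit) exp_le_cancel_iff)
  finally show ?thesis by (simp add: B_def mult.assoc)
qed

lemma square_le_four_choose_two:
  assumes "N \<ge> 2"
  shows "real N ^ 2 \<le> 4 * real (N choose 2)"
proof -
  have "even (N * (N - 1))"
    by auto
  then have "2 * (N choose 2) = N * (N - 1)"
    by (simp add: choose_two)
  then have "real (2 * (N choose 2)) = real (N * (N - 1))"
    by (simp only:)
  then have "4 * real (N choose 2) = 2 * real N * (real N - 1)"
    using assms by (simp add: of_nat_diff)
  moreover have "2 * real N \<le> real N * real N"
    using assms by (intro mult_right_mono) auto
  ultimately show ?thesis
    by (simp add: power2_eq_square algebra_simps)
qed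

lemma ergm_max_deviation_prob_le:
  assumes "n > 0" and "\<delta> > 0"
  shows "iid_prob K \<beta> T N n
           (\<lambda>s. (MAX G\<in>graphs_on N. \<bar>(\<Sum>i=1..n. X_stat K \<beta> T N s i G) / real n - 1\<bar>) > \<delta>)
     \<le> (\<Sum>G\<in>graphs_on N. 1 / ergm_prob K \<beta> T N G) / (\<delta>\<^sup>2 * real n)"
proof -
  define \<Omega> where "\<Omega> = graphs_on N"
  define p where "p = ergm_prob K \<beta> T N"
  define Z where "Z G x = (if x = G then 1 else 0) / p G - 1" for G x
  have \<Omega>: "finite \<Omega>" "\<Omega> \<noteq> {}" and p: "sum p \<Omega> = 1" and p_pos: "\<And>G. p G > 0"
    using finite_graphs_on empty_in_graphs_on[of N] sum_ergm_prob ergm_prob_pos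
    by (auto simp: \<Omega>_def p_def)
  have X_centred: "(\<Sum>i=1..n. X_stat K \<beta> T N s i G) / real n - 1 = (\<Sum>i=1..n. Z G (s i)) / real n"
    for s G
    using \<open>n > 0\<close> by (simp add: X_stat_def Z_def p_def sum_subtractf diff_divide_distrib)
  have "iid_prob K \<beta> T N n
           (\<lambda>s. (MAX G\<in>graphs_on N. \<bar>(\<Sum>i=1..n. X_stat K \<beta> T N s i G) / real n - 1\<bar>) > \<delta>)
     = (\<Sum>s\<in>{1..n} \<rightarrow>\<^sub>E \<Omega>.
          if (MAX G\<in>\<Omega>. \<bar>(\<Sum>i=1..n. Z G (s i)) / real n\<bar>) > \<delta> then \<Prod>i=1..n. p (s i) else 0)"
    by (simp only: iid_prob_def X_centred \<Omega>_def p_def)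
  also have "\<dots> \<le> (\<Sum>G\<in>\<Omega>. \<Sum>x\<in>\<Omega>. p x * (Z G x)\<^sup>2) / (\<delta>\<^sup>2 * real n)"
    using \<Omega> p p_pos \<open>\<delta> > 0\<close>
    by (intro iid_max_deviation_prob_le)
      (auto simp: Z_def less_imp_le indicator_ratio_centred[OF \<Omega>(1) p _ p_pos])
  also have "\<dots> \<le> (\<Sum>G\<in>\<Omega>. 1 / p G) / (\<delta>\<^sup>2 * real n)"
    using \<Omega> p p_pos by (intro divide_right_mono sum_mono) (auto simp: Z_def indicator_ratio_second_moment)
  finally show ?thesis by (simp only: \<Omega>_def p_def)
qed

lemma ergm_max_deviation_prob_le_exp:
  assumes fin: "\<forall>k\<in>{1..K}. finite (fst (T k))" and N: "N \<ge> 2" and n: "n > 0" and \<epsilon>: "\<epsilon> > 0"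
  shows "iid_prob K \<beta> T N n
           (\<lambda>s. (MAX G\<in>graphs_on N. \<bar>(\<Sum>i=1..n. X_stat K \<beta> T N s i G) / real n - 1\<bar>) > \<epsilon> / real N)
     \<le> 4 / \<epsilon>\<^sup>2 * (exp ((3 + 8 * (\<Sum>k=1..K. \<bar>\<beta> k\<bar>)) * real (N choose 2)) / real n)"
proof -
  define B where "B = (\<Sum>k=1..K. \<bar>\<beta> k\<bar>)"
  define c where "c = real (N choose 2)"
  define g where "g = real (card (graphs_on N))"
  have N_sq: "real N ^ 2 \<le> 4 * c"
    unfolding c_def using N by (rule square_le_four_choose_two)
  have g: "0 \<le> g" "g \<le> exp c"
    unfolding g_def c_def by (simp_all add: card_graphs_on_le_exp)
  have "(\<Sum>G\<in>graphs_on N. 1 / ergm_prob K \<beta> T N G) \<le> g * (g * exp (2 * real N ^ 2 * B))"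
    unfolding g_def B_def using inverse_ergm_prob_le[OF fin] by (intro sum_bounded_above) auto
  also have "\<dots> \<le> exp c * (exp c * exp (8 * B * c))"
  proof -
    have "B \<ge> 0"
      unfolding B_def by (simp add: sum_nonneg)
    then have "exp (2 * real N ^ 2 * B) \<le> exp (8 * B * c)"
      using mult_right_mono[OF N_sq] by (simp add: mult_ac)
    then show ?thesis
      using g by (intro mult_mono) auto
  qed
  finally have sum_inv: "(\<Sum>G\<in>graphs_on N. 1 / ergm_prob K \<beta> T N G) \<le> exp ((2 + 8 * B) * c)"
    by (simp add: algebra_simps flip: exp_add)
  have "iid_prob K \<beta> T N n
           (\<lambda>s. (MAX G\<in>graphs_on N. \<bar>(\<Sum>i=1..n. X_stat K \<beta> T N s i G) / real n - 1\<bar>) > \<epsilon> / real N)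
     \<le> (\<Sum>G\<in>graphs_on N. 1 / ergm_prob K \<beta> T N G) / ((\<epsilon> / real N)\<^sup>2 * real n)"
    using n \<epsilon> N by (intro ergm_max_deviation_prob_le) auto
  also have "\<dots> = real N ^ 2 * (\<Sum>G\<in>graphs_on N. 1 / ergm_prob K \<beta> T N G) / (\<epsilon>\<^sup>2 * real n)"
    using N by (simp add: power_divide)
  also have "\<dots> \<le> (4 * exp c) * exp ((2 + 8 * B) * c) / (\<epsilon>\<^sup>2 * real n)"
  proof -
    have "real N ^ 2 \<le> 4 * exp c"
      using N_sq exp_ge_add_one_self[of c] by linarith
    moreover have "0 \<le> (\<Sum>G\<in>graphs_on N. 1 / ergm_prob K \<beta> T N G)"
      by (intro sum_nonneg) (simp add: ergm_prob_pos less_imp_le)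
    ultimately show ?thesis
      using sum_inv by (intro divide_right_mono mult_mono) auto
  qed
  also have "\<dots> = 4 / \<epsilon>\<^sup>2 * (exp ((3 + 8 * B) * c) / real n)"
    by (simp add: algebra_simps flip: exp_add)
  finally show ?thesis by (simp only: B_def c_def)
qed

lemma iid_prob_nonneg: "0 \<le> iid_prob K \<beta> T N n P"
  unfolding iid_prob_def by (intro sum_nonneg) (simp add: prod_nonneg ergm_prob_pos less_imp_le)

lemma exp_mult_small_o_ln_div_tendsto_zero:
  fixes c :: "nat \<Rightarrow> real"
  assumes "c \<in> o(\<lambda>n. ln (real n))"
  shows "(\<lambda>n. exp (A * c n) / real n) \<longlonglongrightarrow> 0"
proof -
  have "\<forall>\<^sub>F n in sequentially. \<bar>c n\<bar> \<le> 1 / (2 * (\<bar>A\<bar> + 1)) * \<bar>ln (real n)\<bar>"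
    using landau_o.smallD[OF assms, of "1 / (2 * (\<bar>A\<bar> + 1))"] by simp
  moreover have "\<forall>\<^sub>F n in sequentially. n > 0"
    by (rule eventually_gt_at_top)
  ultimately have "\<forall>\<^sub>F n in sequentially. exp (A * c n) / real n \<le> exp (ln (real n) / 2) / real n"
  proof eventually_elim
    case (elim n)
    have "A * c n \<le> \<bar>A\<bar> * \<bar>c n\<bar>"
      by (metis abs_ge_self abs_mult)
    also have "\<dots> \<le> (\<bar>A\<bar> + 1) * \<bar>c n\<bar>"
      by (simp add: distrib_right)
    also have "\<dots> \<le> ln (real n) / 2"
      using elim by (simp add: field_simps)
    finally show ?case
      by (intro divide_right_mono) auto
  qed
  moreover have "(\<lambda>n. exp (ln (real n) / 2) / real n) \<longlonglongrightarrow> 0"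
    by real_asymp
  ultimately show ?thesis
    by (rule tendsto_sandwich[OF always_eventually _ tendsto_const, rotated]) simp
qed

theorem mainTheorem16:
  fixes K :: nat and \<beta> :: "nat \<Rightarrow> real" and T :: "nat \<Rightarrow> nat set \<times> nat set set"
    and m :: "nat \<Rightarrow> nat" and \<epsilon> :: real
  assumes "K \<ge> 1"
    and "\<forall>k\<in>{1..K}. simple_graph (fst (T k)) (snd (T k))"
    and "card (fst (T 1)) = 2" and "snd (T 1) = {fst (T 1)}"
    and "\<forall>k\<in>{2..K}. card (snd (T k)) \<ge> 2"
    and "filterlim m at_top sequentially"
    and "(\<lambda>n. real (m n choose 2)) \<in> o(\<lambda>n. ln (real n))"
    and "\<epsilon> > 0"
  shows "(\<lambda>n. iid_prob K \<beta> T (m n) n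
            (\<lambda>s. (MAX G\<in>graphs_on (m n).
                    \<bar>(\<Sum>i=1..n. X_stat K \<beta> T (m n) s i G) / real n - 1\<bar>) > \<epsilon> / real (m n)))
         \<longlonglongrightarrow> 0"
proof -
  define A where "A = 3 + 8 * (\<Sum>k=1..K. \<bar>\<beta> k\<bar>)"
  have fin: "\<forall>k\<in>{1..K}. finite (fst (T k))"
    using assms(2) by (simp add: simple_graph_def)
  have "\<forall>\<^sub>F n in sequentially. m n \<ge> 2"
    using assms(6) by (simp add: filterlim_at_top)
  moreover have "\<forall>\<^sub>F n in sequentially. n > 0"
    by (rule eventually_gt_at_top)
  ultimately have "\<forall>\<^sub>F n in sequentially. iid_prob K \<beta> T (m n) n
            (\<lambda>s. (MAX G\<in>graphs_on (m n).
                    \<bar>(\<Sum>i=1..n. X_stat K \<beta> T (m n) s i G) / real n - 1\<bar>) > \<epsilon> / real (m n))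
      \<le> 4 / \<epsilon>\<^sup>2 * (exp (A * real (m n choose 2)) / real n)"
    unfolding A_def by eventually_elim (rule ergm_max_deviation_prob_le_exp[OF fin _ _ assms(8)])
  moreover have "(\<lambda>n. 4 / \<epsilon>\<^sup>2 * (exp (A * real (m n choose 2)) / real n)) \<longlonglongrightarrow> 0"
    by (intro tendsto_mult_right_zero exp_mult_small_o_ln_div_tendsto_zero assms(7))
  ultimately show ?thesis
    by (rule tendsto_sandwich[OF always_eventually _ tendsto_const, rotated]) (simp add: iid_prob_nonneg)
qed

end
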